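(* Let $\mathbf{A}\in\mathbb{R}^{n\times d}$, $\mathbf{B}=[\mathbf{b}_1,\dots,\mathbf{b}_{d_B}]\in\mathbb{R}^{n\times d_B}$, $\mathbf{C}=[\mathbf{c}_1,\dots,\mathbf{c}_{n_C}]^{\rm T}\in\mathbb{R}^{n_C\times d}$, and let $k,r$ be integers with $1\le k\le\mathrm{rank}(\mathbf{B})$, $1\le r\le\mathrm{rank}(\mathbf{C})$. Then $$P_{k,r}(x;\mathbf{A},\mathbf{B},\mathbf{C})=\frac1k\sum_{i=1}^{d_B}\|\mathbf{b}_i\|^2P_{k-1,r}(x;\mathbf{Q}_{\{i\}}\mathbf{A},\mathbf{Q}_{\{i\}}\mathbf{B},\mathbf{C})$$ and $$P_{k,r}(x;\mathbf{A},\mathbf{B},\mathbf{C})=\frac1r\sum_{i=1}^{n_C}\|\mathbf{c}_i\|^2P_{k,r-1}(x;\mathbf{A}\mathbf{P}_{\{i\}},\mathbf{B},\mathbf{C}\mathbf{P}_{\{i\}}).$$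
   Context: Notation: $\mathbf{M}_{R,S}$, $\mathbf{M}_{:,S}$, $\mathbf{M}_{R,:}$ are submatrices; $\mathbf{M}^\dagger$ Moore–Penrose pseudoinverse with $\mathbf{M}_{R,S}^\dagger:=(\mathbf{M}_{R,S})^\dagger$; empty determinants are $1$ and $\mathbf{M}_{:,\emptyset}\mathbf{M}_{:,\emptyset}^\dagger$, $\mathbf{M}_{\emptyset,:}^\dagger\mathbf{M}_{\emptyset,:}$ are zero. $\mathbf{Q}_{\{i\}}=\mathbf{I}_n-\mathbf{b}_i\mathbf{b}_i^\dagger$ and $\mathbf{P}_{\{i\}}=\mathbf{I}_d-\mathbf{c}_i^{\rm T\dagger}\mathbf{c}_i^{\rm T}$ (i.e. $\mathbf{Q}_S=\mathbf{I}_n-\mathbf{B}_{:,S}\mathbf{B}_{:,S}^\dagger$, $\mathbf{P}_R=\mathbf{I}_d-\mathbf{C}_{R,:}^\dagger\mathbf{C}_{R,:}$ for singletons). For general $\mathbf{A}',\mathbf{B}',\mathbf{C}'$ of shapes $n\times d$, $n\times d_B$, $n_C\times d$: $p_{T,U}(x;\mathbf{A}',\mathbf{B}',\mathbf{C}')=\det[x\mathbf{I}_d-(\mathbf{Q}'_T\mathbf{A}'\mathbf{P}'_U)^{\rm T}(\mathbf{Q}'_T\mathbf{A}'\mathbf{P}'_U)]$ with $\mathbf{Q}'_T=\mathbf{I}_n-\mathbf{B}'_{:,T}\mathbf{B}'^\dagger_{:,T}$, $\mathbf{P}'_U=\mathbf{I}_d-\mathbf{C}'^\dagger_{U,:}\mathbf{C}'_{U,:}$,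 and $P_{k,r}(x;\mathbf{A}',\mathbf{B}',\mathbf{C}')=\sum_{U\subset[n_C],|U|=r}\sum_{T\subset[d_B],|T|=k}\det[\mathbf{C}'_{U,:}\mathbf{C}'^{\rm T}_{U,:}]\det[\mathbf{B}'^{\rm T}_{:,T}\mathbf{B}'_{:,T}]\,p_{T,U}(x;\mathbf{A}',\mathbf{B}',\mathbf{C}')$. *)

theory Defs
  imports "Jordan_Normal_Form.DL_Rank_Submatrix"
begin

definition pinv :: "real mat \<Rightarrow> real mat" where
  "pinv M = (THE X. X \<in> carrier_mat (dim_col M) (dim_row M) \<and>
      M * X * M = M \<and> X * M * X = X \<and>
      transpose_mat (M * X) = M * X \<and> transpose_mat (X * M) = X * M)"

text \<open>Column submatrix B_{:,T} and row submatrix C_{U,:} (indices are 0-based).\<close>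
definition colsub :: "real mat \<Rightarrow> nat set \<Rightarrow> real mat" where
  "colsub B T = submatrix B UNIV T"

definition rowsub :: "real mat \<Rightarrow> nat set \<Rightarrow> real mat" where
  "rowsub C U = submatrix C U UNIV"

definition projQ :: "real mat \<Rightarrow> nat set \<Rightarrow> real mat" where
  "projQ B T = 1\<^sub>m (dim_row B) - colsub B T * pinv (colsub B T)"

definition projP :: "real mat \<Rightarrow> nat set \<Rightarrow> real mat" where
  "projP C U = 1\<^sub>m (dim_col C) - pinv (rowsub C U) * rowsub C U"

definition pTU :: "nat set \<Rightarrow> nat set \<Rightarrow> real \<Rightarrow> real mat \<Rightarrow> real mat \<Rightarrow> real mat \<Rightarrow> real" where
  "pTU T U x A B C =
     (let M = projQ B T * A * projP C U
      in det (x \<cdot>\<^sub>m 1\<^sub>m (dim_col A) - transpose_mat M * M))"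

definition Pkr :: "nat \<Rightarrow> nat \<Rightarrow> real \<Rightarrow> real mat \<Rightarrow> real mat \<Rightarrow> real mat \<Rightarrow> real" where
  "Pkr k r x A B C =
     (\<Sum>U\<in>{U. U \<subseteq> {..<dim_row C} \<and> card U = r}.
       \<Sum>T\<in>{T. T \<subseteq> {..<dim_col B} \<and> card T = k}.
         det (rowsub C U * transpose_mat (rowsub C U)) *
         det (transpose_mat (colsub B T) * colsub B T) * pTU T U x A B C)"

end

theory Submission
  imports Defs
begin

(* Fix i in T and let b_i be the i-th column of B. The Gram matrix of B_T has the pivot |b_i|^2
   at the position of i, and its Schur complement there is the Gram matrix of (Q_i B)_(T-{i});
   hence det(B_T^T B_T) = |b_i|^2 det((Q_i B)_(T-{i})^T (Q_i B)_(T-{i})). If this is nonzero, b_i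
   together with the columns of (Q_i B)_(T-{i}) spans the column space of B_T, which gives
   Q_T = Q'_(T-{i}) Q_i with Q' formed from Q_i B. So the term of P_(k,r)(A,B,C) indexed by T is
   |b_i|^2 times the term of P_(k-1,r)(Q_i A, Q_i B, C) indexed by T-{i}. Summing over i counts
   every T exactly k times, while the terms of P_(k-1,r)(Q_i A, Q_i B, C) whose index set
   contains i vanish, because column i of Q_i B is zero. For C the same argument applies to C^T,
   since P_U is the projector Q_U of C^T. *)

section \<open>Moore--Penrose inverses\<close>

lemma assoc_mult_mat_dims:
  "dim_col (A :: 'a :: semiring_0 mat) = dim_row B \<Longrightarrow> dim_col B = dim_row C \<Longrightarrow> A * B * C = A * (B * C)"
  by (rule assoc_mult_mat[of A "dim_row A" "dim_col A" B "dim_col B" C "dim_col C"]) auto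

lemma transpose_mult_dims:
  "dim_col (A :: 'a :: comm_semiring_0 mat) = dim_row B \<Longrightarrow> transpose_mat (A * B) = transpose_mat B * transpose_mat A"
  by (rule transpose_mult[of A "dim_row A" "dim_col A" B "dim_col B"]) auto

definition moore_penrose :: "'a :: comm_ring_1 mat \<Rightarrow> 'a mat \<Rightarrow> bool" where
  "moore_penrose M X \<longleftrightarrow> X \<in> carrier_mat (dim_col M) (dim_row M) \<and>
     M * X * M = M \<and> X * M * X = X \<and>
     transpose_mat (M * X) = M * X \<and> transpose_mat (X * M) = X * M"

lemma moore_penrose_unique:
  assumes X: "moore_penrose M X" and Y: "moore_penrose M Y"
  shows "X = Y"
proof -
  have [simp]: "dim_row X = dim_col M" "dim_col X = dim_row M" "dim_row Y = dim_col M" "dim_col Y = dim_row M"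
    using X Y unfolding moore_penrose_def by auto
  have MXM: "M * X * M = M" and MYM: "M * Y * M = M" and XMX: "X * M * X = X"
    using X Y unfolding moore_penrose_def by auto
  have "M * X = transpose_mat (M * Y * M * X)"
    using X unfolding MYM moore_penrose_def by simp
  also have "\<dots> = transpose_mat ((M * Y) * (M * X))" by (simp add: assoc_mult_mat_dims)
  also have "\<dots> = (M * X) * (M * Y)"
    using X Y unfolding moore_penrose_def by (simp add: transpose_mult_dims)
  also have "\<dots> = M * Y" using MXM by (simp add: assoc_mult_mat_dims[symmetric])
  finally have MX: "M * X = M * Y" .
  have "X * M = transpose_mat (X * (M * Y * M))"
    using X unfolding MYM moore_penrose_def by simp
  also have "\<dots> = transpose_mat ((X * M) * (Y * M))" by (simp add: assoc_mult_mat_dims)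
  also have "\<dots> = (Y * M) * (X * M)"
    using X Y unfolding moore_penrose_def by (simp add: transpose_mult_dims)
  also have "\<dots> = Y * M" using MXM by (simp add: assoc_mult_mat_dims)
  finally have XM: "X * M = Y * M" .
  have "X = X * (M * X)" using XMX by (simp add: assoc_mult_mat_dims)
  also have "\<dots> = (X * M) * Y" unfolding MX by (simp add: assoc_mult_mat_dims)
  also have "\<dots> = Y" using Y unfolding XM moore_penrose_def by simp
  finally show ?thesis .
qed

lemma pinv_eqI: "moore_penrose M X \<Longrightarrow> pinv M = X"
  unfolding pinv_def moore_penrose_def[symmetric]
  by (rule the_equality) (auto intro: moore_penrose_unique)

lemma moore_penrose_transpose:
  assumes "moore_penrose M X"
  shows "moore_penrose (transpose_mat M) (transpose_mat X)"
proof -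
  have [simp]: "dim_row X = dim_col M" "dim_col X = dim_row M"
    and MXM: "M * X * M = M" and XMX: "X * M * X = X"
    and MX: "transpose_mat (M * X) = M * X" and XM: "transpose_mat (X * M) = X * M"
    using assms unfolding moore_penrose_def by auto
  have "transpose_mat M * transpose_mat X * transpose_mat M = transpose_mat (M * X * M)"
    by (simp add: transpose_mult_dims assoc_mult_mat_dims)
  moreover have "transpose_mat X * transpose_mat M * transpose_mat X = transpose_mat (X * M * X)"
    by (simp add: transpose_mult_dims assoc_mult_mat_dims)
  moreover have "transpose_mat M * transpose_mat X = transpose_mat (X * M)"
    and "transpose_mat X * transpose_mat M = transpose_mat (M * X)"
    by (simp_all add: transpose_mult_dims)
  ultimately show ?thesis unfolding moore_penrose_def using MXM XMX MX XM by auto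
qed

lemma pinv_transpose: "moore_penrose M X \<Longrightarrow> pinv (transpose_mat M) = transpose_mat X"
  by (intro pinv_eqI moore_penrose_transpose)

lemma moore_penrose_left_inverse:
  assumes X: "X \<in> carrier_mat (dim_col M) (dim_row M)" and XM: "X * M = 1\<^sub>m (dim_col M)"
    and MX: "transpose_mat (M * X) = M * X"
  shows "moore_penrose M X"
  unfolding moore_penrose_def
  using X XM MX by (simp add: assoc_mult_mat_dims)

definition inverse_mat :: "'a :: field mat \<Rightarrow> 'a mat" where
  "inverse_mat G = (1 / det G) \<cdot>\<^sub>m adj_mat G"

lemma inverse_mat:
  assumes G: "G \<in> carrier_mat t t" and d: "det G \<noteq> 0"
  shows "inverse_mat G \<in> carrier_mat t t" "inverse_mat G * G = 1\<^sub>m t" "G * inverse_mat G = 1\<^sub>m t"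
proof -
  show "inverse_mat G \<in> carrier_mat t t" unfolding inverse_mat_def using adj_mat(1)[OF G] by simp
  have "inverse_mat G * G = (1 / det G) \<cdot>\<^sub>m (adj_mat G * G)"
    unfolding inverse_mat_def using adj_mat(1)[OF G] G by (simp add: mult_smult_assoc_mat)
  then show "inverse_mat G * G = 1\<^sub>m t"
    using adj_mat(3)[OF G] d by (auto intro!: eq_matI)
  have "G * inverse_mat G = (1 / det G) \<cdot>\<^sub>m (G * adj_mat G)"
    unfolding inverse_mat_def using adj_mat(1)[OF G] G by (simp add: mult_smult_distrib)
  then show "G * inverse_mat G = 1\<^sub>m t"
    using adj_mat(2)[OF G] d by (auto intro!: eq_matI)
qed

lemma transpose_inverse_mat:
  assumes G: "G \<in> carrier_mat t t" and d: "det G \<noteq> 0" and sym: "transpose_mat G = G"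
  shows "transpose_mat (inverse_mat G) = inverse_mat G"
proof -
  note I = inverse_mat[OF G d]
  have Ic: "transpose_mat (inverse_mat G) \<in> carrier_mat t t" using I(1) by simp
  have "transpose_mat (inverse_mat G) * G = transpose_mat (G * inverse_mat G)"
    using I G sym by (metis transpose_mult)
  then have left: "transpose_mat (inverse_mat G) * G = 1\<^sub>m t" using I by simp
  have "transpose_mat (inverse_mat G) = transpose_mat (inverse_mat G) * (G * inverse_mat G)"
    using I Ic by simp
  also have "\<dots> = (transpose_mat (inverse_mat G) * G) * inverse_mat G"
    using assoc_mult_mat[OF Ic G I(1)] by simp
  also have "\<dots> = inverse_mat G" using I(1) left by simp
  finally show ?thesis .
qed

lemma moore_penrose_full_column_rank:
  assumes M: "M \<in> carrier_mat m t" and d: "det (transpose_mat M * M) \<noteq> 0"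
  shows "moore_penrose M (inverse_mat (transpose_mat M * M) * transpose_mat M)"
proof (rule moore_penrose_left_inverse)
  let ?G = "transpose_mat M * M"
  have G: "?G \<in> carrier_mat t t" using M by auto
  note I = inverse_mat[OF G d]
  have sym: "transpose_mat (inverse_mat ?G) = inverse_mat ?G"
    using transpose_inverse_mat[OF G d] M by (simp add: transpose_mult_dims)
  show "inverse_mat ?G * transpose_mat M \<in> carrier_mat (dim_col M) (dim_row M)"
    using I M by auto
  show "inverse_mat ?G * transpose_mat M * M = 1\<^sub>m (dim_col M)"
    using I M by (simp add: assoc_mult_mat_dims)
  show "transpose_mat (M * (inverse_mat ?G * transpose_mat M)) = M * (inverse_mat ?G * transpose_mat M)"
    using I M sym by (simp add: transpose_mult_dims assoc_mult_mat_dims)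
qed

lemma minus_zero_mat: "A \<in> carrier_mat nr nc \<Longrightarrow> (A :: 'a :: ab_group_add mat) - 0\<^sub>m nr nc = A"
  by (intro eq_matI) auto

section \<open>Projectors onto orthogonal complements of column spaces\<close>

lemma
  assumes X: "moore_penrose N X" and N: "N \<in> carrier_mat n t"
  shows compl_proj_carrier: "1\<^sub>m n - N * X \<in> carrier_mat n n"
    and transpose_compl_proj: "transpose_mat (1\<^sub>m n - N * X) = 1\<^sub>m n - N * X"
    and compl_proj_mult_self: "(1\<^sub>m n - N * X) * N = 0\<^sub>m n t"
    and compl_proj_idem: "(1\<^sub>m n - N * X) * (1\<^sub>m n - N * X) = 1\<^sub>m n - N * X"
proof -
  have Xc: "X \<in> carrier_mat t n" and NXN: "N * X * N = N"
    and NX: "transpose_mat (N * X) = N * X"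
    using X N unfolding moore_penrose_def by auto
  have NXc: "N * X \<in> carrier_mat n n" using N Xc by auto
  show P: "1\<^sub>m n - N * X \<in> carrier_mat n n" using NXc by (rule minus_carrier_mat)
  show "transpose_mat (1\<^sub>m n - N * X) = 1\<^sub>m n - N * X"
    using NX by (simp add: transpose_minus[OF one_carrier_mat NXc])
  show kill: "(1\<^sub>m n - N * X) * N = 0\<^sub>m n t"
    using N NXN by (simp add: minus_mult_distrib_mat[OF one_carrier_mat NXc N])
  have "(1\<^sub>m n - N * X) * (N * X) = 0\<^sub>m n n"
    using kill Xc by (simp add: assoc_mult_mat[symmetric, OF P N Xc])
  then show "(1\<^sub>m n - N * X) * (1\<^sub>m n - N * X) = 1\<^sub>m n - N * X"
    by (simp add: mult_minus_distrib_mat[OF P one_carrier_mat NXc] right_mult_one_mat[OF P] minus_zero_mat[OF P])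
qed

lemma compl_proj_absorb_left:
  assumes X: "moore_penrose N X" and N: "N \<in> carrier_mat n t"
    and P: "P \<in> carrier_mat m n" and PN: "P * N = 0\<^sub>m m t"
  shows "P * (1\<^sub>m n - N * X) = P"
proof -
  have Xc: "X \<in> carrier_mat t n" using X N unfolding moore_penrose_def by auto
  have "P * (N * X) = 0\<^sub>m m n"
    using PN Xc by (simp add: assoc_mult_mat[symmetric, OF P N Xc])
  then show ?thesis
    using P N Xc by (simp add: mult_minus_distrib_mat[OF P one_carrier_mat] minus_zero_mat[OF P])
qed

lemma compl_proj_absorb_right:
  assumes X: "moore_penrose N X" and N: "N \<in> carrier_mat n t"
    and R: "R \<in> carrier_mat n n" and sym: "transpose_mat R = R" and RN: "R * N = 0\<^sub>m n t"
  shows "(1\<^sub>m n - N * X) * R = R"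
proof -
  have Xc: "X \<in> carrier_mat t n" and NX: "transpose_mat (N * X) = N * X"
    using X N unfolding moore_penrose_def by auto
  have "transpose_mat N * R = transpose_mat (R * N)"
    using R N sym by (simp add: transpose_mult[OF R N])
  then have NR: "transpose_mat N * R = 0\<^sub>m t n" using RN by simp
  have "N * X * R = transpose_mat X * transpose_mat N * R"
    using NX by (simp add: transpose_mult[OF N Xc])
  also have "\<dots> = 0\<^sub>m n n" using NR Xc N R by (simp add: assoc_mult_mat_dims)
  finally have "N * X * R = 0\<^sub>m n n" .
  then show ?thesis
    using R N Xc by (simp add: minus_mult_distrib_mat[of _ n n] minus_zero_mat[OF R])
qed

lemma compl_proj_commute:
  assumes X: "moore_penrose N X" and N: "N \<in> carrier_mat n t"
    and P: "P \<in> carrier_mat n n" and sym: "transpose_mat P = P" and PN: "P * N = N"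
  shows "P * (1\<^sub>m n - N * X) = (1\<^sub>m n - N * X) * P"
proof -
  have Xc: "X \<in> carrier_mat t n" and NX: "transpose_mat (N * X) = N * X"
    using X N unfolding moore_penrose_def by auto
  have "transpose_mat N * P = transpose_mat (P * N)"
    using P N sym by (simp add: transpose_mult[OF P N])
  then have NP: "transpose_mat N * P = transpose_mat N" using PN by simp
  have "N * X * P = transpose_mat X * transpose_mat N * P"
    using NX by (simp add: transpose_mult[OF N Xc])
  also have "\<dots> = transpose_mat X * transpose_mat N" using NP Xc N P by (simp add: assoc_mult_mat_dims)
  also have "\<dots> = N * X" using NX by (simp add: transpose_mult[OF N Xc])
  finally have right: "N * X * P = N * X" .
  have left: "P * (N * X) = N * X" using PN by (simp add: assoc_mult_mat[symmetric, OF P N Xc])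
  have NXc: "N * X \<in> carrier_mat n n" using N Xc by auto
  have "P * (1\<^sub>m n - N * X) = P - N * X"
    using left by (simp add: mult_minus_distrib_mat[OF P one_carrier_mat NXc] right_mult_one_mat[OF P])
  also have "\<dots> = (1\<^sub>m n - N * X) * P"
    using right by (simp add: minus_mult_distrib_mat[OF one_carrier_mat NXc P] left_mult_one_mat[OF P])
  finally show ?thesis .
qed

section \<open>Column submatrices and Gram determinants\<close>

lemma col_mult_mat: "c < dim_col B \<Longrightarrow> col (A * B) c = A *\<^sub>v col B c"
  by (rule eq_vecI) auto

lemma dim_colsub[simp]:
  "dim_row (colsub B S) = dim_row B"
  "dim_col (colsub B S) = card {j. j < dim_col B \<and> j \<in> S}"
  unfolding colsub_def dim_submatrix by auto

lemma colsub_carrier: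
  assumes "B \<in> carrier_mat n m" and "S \<subseteq> {..<m}"
  shows "colsub B S \<in> carrier_mat n (card S)"
proof (rule carrier_matI)
  show "dim_row (colsub B S) = n" using assms(1) by simp
  have "{j. j < dim_col B \<and> j \<in> S} = S" using assms by auto
  then show "dim_col (colsub B S) = card S" by simp
qed

lemma index_colsub[simp]:
  "r < dim_row B \<Longrightarrow> c < dim_col (colsub B S) \<Longrightarrow> colsub B S $$ (r, c) = B $$ (r, pick S c)"
  unfolding colsub_def by (subst submatrix_index) (auto simp: dim_submatrix pick_UNIV)

lemma col_colsub: "c < dim_col (colsub B S) \<Longrightarrow> col (colsub B S) c = col B (pick S c)"
  by (rule eq_vecI) (auto simp: pick_le)

lemma colsub_mult: "dim_col Q = dim_row B \<Longrightarrow> colsub (Q * B) S = Q * colsub B S"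
  by (rule eq_matI) (auto simp: col_colsub pick_le)

lemma mult_colsub_eq_0_iff:
  assumes Q: "dim_col Q = dim_row B"
  shows "Q * colsub B S = 0\<^sub>m (dim_row Q) (dim_col (colsub B S)) \<longleftrightarrow>
     (\<forall>j\<in>S. j < dim_col B \<longrightarrow> Q *\<^sub>v col B j = 0\<^sub>v (dim_row Q))"
proof
  assume z: "Q * colsub B S = 0\<^sub>m (dim_row Q) (dim_col (colsub B S))"
  show "\<forall>j\<in>S. j < dim_col B \<longrightarrow> Q *\<^sub>v col B j = 0\<^sub>v (dim_row Q)"
  proof (intro ballI impI)
    fix j assume jS: "j \<in> S" and j: "j < dim_col B"
    define c where "c = card {a\<in>S. a < j}"
    have "{a\<in>S. a < j} \<subset> {a. a < dim_col B \<and> a \<in> S}" using jS j by auto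
    then have c: "c < dim_col (colsub B S)" unfolding c_def by (simp add: psubset_card_mono)
    have "pick S c = j" unfolding c_def by (rule pick_card_in_set[OF jS])
    then have "Q *\<^sub>v col B j = Q *\<^sub>v col (colsub B S) c" using col_colsub[OF c] by simp
    also have "\<dots> = col (Q * colsub B S) c" using c by (simp add: col_mult_mat)
    also have "\<dots> = 0\<^sub>v (dim_row Q)" unfolding z using c by simp
    finally show "Q *\<^sub>v col B j = 0\<^sub>v (dim_row Q)" .
  qed
next
  assume kill: "\<forall>j\<in>S. j < dim_col B \<longrightarrow> Q *\<^sub>v col B j = 0\<^sub>v (dim_row Q)"
  show "Q * colsub B S = 0\<^sub>m (dim_row Q) (dim_col (colsub B S))"
  proof (rule eq_matI)
    fix r c assume r: "r < dim_row (0\<^sub>m (dim_row Q) (dim_col (colsub B S)))"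
      and "c < dim_col (0\<^sub>m (dim_row Q) (dim_col (colsub B S)))"
    then have c: "c < card {j. j < dim_col B \<and> j \<in> S}" by simp
    have "c < card S \<or> infinite S"
    proof (cases "finite S")
      case True
      then have "card {j. j < dim_col B \<and> j \<in> S} \<le> card S" by (intro card_mono) auto
      then show ?thesis using c by simp
    qed simp
    then have "pick S c \<in> S" by (rule pick_in_set)
    then have "(Q *\<^sub>v col B (pick S c)) $ r = 0" using kill pick_le[OF c] r by simp
    then show "(Q * colsub B S) $$ (r, c) = 0\<^sub>m (dim_row Q) (dim_col (colsub B S)) $$ (r, c)"
      using r c by (simp add: col_colsub)
  qed auto
qed

definition gram_mat :: "real mat \<Rightarrow> nat set \<Rightarrow> real mat" where
  "gram_mat B S = transpose_mat (colsub B S) * colsub B S"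

definition gram :: "real mat \<Rightarrow> nat set \<Rightarrow> real" where
  "gram B S = det (gram_mat B S)"

lemma moore_penrose_colsub:
  assumes "gram B S \<noteq> 0"
  shows "moore_penrose (colsub B S) (pinv (colsub B S))"
proof -
  have N: "colsub B S \<in> carrier_mat (dim_row B) (dim_col (colsub B S))" by (intro carrier_matI) simp_all
  from assms have "det (transpose_mat (colsub B S) * colsub B S) \<noteq> 0"
    unfolding gram_def gram_mat_def .
  from moore_penrose_full_column_rank[OF N this] have mp: "moore_penrose (colsub B S)
      (inverse_mat (transpose_mat (colsub B S) * colsub B S) * transpose_mat (colsub B S))" .
  show ?thesis unfolding pinv_eqI[OF mp] by (rule mp)
qed

lemma projQ_eq:
  assumes "moore_penrose (colsub B S) X"
  shows "projQ B S = 1\<^sub>m (dim_row B) - colsub B S * X"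
  unfolding projQ_def pinv_eqI[OF assms] ..

lemma
  assumes B: "B \<in> carrier_mat n m" and X: "moore_penrose (colsub B S) X"
  shows projQ_carrier: "projQ B S \<in> carrier_mat n n"
    and transpose_projQ: "transpose_mat (projQ B S) = projQ B S"
proof -
  have N: "colsub B S \<in> carrier_mat n (dim_col (colsub B S))" using B by (intro carrier_matI) simp_all
  have Q: "projQ B S = 1\<^sub>m n - colsub B S * X" using projQ_eq[OF X] B by simp
  show "projQ B S \<in> carrier_mat n n" unfolding Q by (rule compl_proj_carrier[OF X N])
  show "transpose_mat (projQ B S) = projQ B S" unfolding Q by (rule transpose_compl_proj[OF X N])
qed

lemma colsub_singleton:
  assumes "i < dim_col B"
  shows "colsub B {i} = mat (dim_row B) 1 (\<lambda>(r, c). B $$ (r, i))"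
proof -
  have "{j. j < dim_col B \<and> j \<in> {i}} = {i}" using assms by auto
  then have card: "dim_col (colsub B {i}) = 1" by (simp only: dim_colsub) simp
  have pick: "(LEAST a. a = i) = i" by (rule Least_equality) auto
  show ?thesis
  proof (rule eq_matI)
    fix r c assume "r < dim_row (mat (dim_row B) 1 (\<lambda>(r, c). B $$ (r, i)))"
      and "c < dim_col (mat (dim_row B) 1 (\<lambda>(r, c). B $$ (r, i)))"
    then have "r < dim_row B" "c = 0" by auto
    then show "colsub B {i} $$ (r, c) = mat (dim_row B) 1 (\<lambda>(r, c). B $$ (r, i)) $$ (r, c)"
      using card by (simp add: pick)
  qed (simp_all only: card dim_row_mat dim_col_mat dim_colsub(1))
qed

lemma scalar_prod_self_eq_0_iff:
  "(v :: real vec) \<in> carrier_vec n \<Longrightarrow> v \<bullet> v = 0 \<longleftrightarrow> v = 0\<^sub>v n"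
  using conjugate_square_eq_0_vec[of v n] by simp

text \<open>The formula also covers a zero column, where the division by zero yields the pseudoinverse 0.\<close>
lemma moore_penrose_colsub_singleton:
  assumes B: "B \<in> carrier_mat n dB" and i: "i < dB"
  shows "moore_penrose (colsub B {i}) ((1 / (col B i \<bullet> col B i)) \<cdot>\<^sub>m transpose_mat (colsub B {i}))"
proof -
  define \<beta> where "\<beta> = col B i \<bullet> col B i"
  have b: "col B i \<in> carrier_vec n" using B i by simp
  have \<beta>: "\<beta> = (\<Sum>r<n. B $$ (r, i) * B $$ (r, i))"
    unfolding \<beta>_def scalar_prod_def using B i by (simp add: atLeast0LessThan)
  have M: "colsub B {i} = mat n 1 (\<lambda>(r, c). B $$ (r, i))" using colsub_singleton[of i B] B i by simp
  show ?thesis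
  proof (cases "\<beta> = 0")
    case True
    then have "col B i = 0\<^sub>v n" using scalar_prod_self_eq_0_iff[OF b] unfolding \<beta>_def by simp
    moreover have "B $$ (r, i) = col B i $ r" if "r < n" for r using that B i by simp
    ultimately have "B $$ (r, i) = 0" if "r < n" for r using that by simp
    then have "colsub B {i} = 0\<^sub>m n 1" unfolding M by (intro eq_matI) auto
    then show ?thesis unfolding \<beta>_def[symmetric] True moore_penrose_def
      by (auto intro!: eq_matI)
  next
    case False
    show ?thesis unfolding \<beta>_def[symmetric]
    proof (rule moore_penrose_left_inverse)
      show "(1 / \<beta>) \<cdot>\<^sub>m transpose_mat (colsub B {i}) * colsub B {i} = 1\<^sub>m (dim_col (colsub B {i}))"
        using False unfolding M \<beta> by (intro eq_matI) (auto simp: scalar_prod_def atLeast0LessThan sum_divide_distrib[symmetric])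
      show "transpose_mat (colsub B {i} * ((1 / \<beta>) \<cdot>\<^sub>m transpose_mat (colsub B {i}))) =
          colsub B {i} * ((1 / \<beta>) \<cdot>\<^sub>m transpose_mat (colsub B {i}))"
        unfolding M by (intro eq_matI) (auto simp: scalar_prod_def mult.left_commute)
      show "(1 / \<beta>) \<cdot>\<^sub>m transpose_mat (colsub B {i}) \<in> carrier_mat (dim_col (colsub B {i})) (dim_row (colsub B {i}))"
        unfolding M by (intro carrier_matI) simp_all
    qed
  qed
qed

lemma
  assumes B: "B \<in> carrier_mat n dB" and i: "i < dB"
  shows projQ_singleton_carrier: "projQ B {i} \<in> carrier_mat n n"
    and transpose_projQ_singleton: "transpose_mat (projQ B {i}) = projQ B {i}"
  using projQ_carrier[OF B moore_penrose_colsub_singleton[OF B i]]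
    transpose_projQ[OF B moore_penrose_colsub_singleton[OF B i]] by auto

lemma projQ_singleton_mult_vec:
  assumes B: "B \<in> carrier_mat n dB" and i: "i < dB" and u: "u \<in> carrier_vec n"
  shows "projQ B {i} *\<^sub>v u = u - ((col B i \<bullet> u) / (col B i \<bullet> col B i)) \<cdot>\<^sub>v col B i"
proof -
  define \<beta> where "\<beta> = col B i \<bullet> col B i"
  have M: "colsub B {i} = mat n 1 (\<lambda>(r, c). B $$ (r, i))" using colsub_singleton[of i B] B i by simp
  have Q: "projQ B {i} = mat n n (\<lambda>(r, s). (if r = s then 1 else 0) - B $$ (r, i) * B $$ (s, i) / \<beta>)"
    unfolding projQ_eq[OF moore_penrose_colsub_singleton[OF B i]] M \<beta>_def[symmetric]
    using B by (intro eq_matI) (auto simp: scalar_prod_def)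
  have bu: "col B i \<bullet> u = (\<Sum>s<n. B $$ (s, i) * u $ s)"
    unfolding scalar_prod_def using B i u by (simp add: atLeast0LessThan)
  show ?thesis
  proof (rule eq_vecI)
    fix r assume "r < dim_vec (u - ((col B i \<bullet> u) / (col B i \<bullet> col B i)) \<cdot>\<^sub>v col B i)"
    then have r: "r < n" using u B by simp
    have "(projQ B {i} *\<^sub>v u) $ r = (\<Sum>s<n. (if r = s then u $ s else 0) - B $$ (r, i) / \<beta> * (B $$ (s, i) * u $ s))"
      unfolding Q using r u by (auto simp: scalar_prod_def atLeast0LessThan algebra_simps intro!: sum.cong)
    also have "\<dots> = u $ r - B $$ (r, i) / \<beta> * (col B i \<bullet> u)"
      unfolding bu using r by (simp add: sum_subtractf sum_distrib_left)
    also have "\<dots> = (u - ((col B i \<bullet> u) / \<beta>) \<cdot>\<^sub>v col B i) $ r"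
      using r u B i by simp
    finally show "(projQ B {i} *\<^sub>v u) $ r = (u - ((col B i \<bullet> u) / (col B i \<bullet> col B i)) \<cdot>\<^sub>v col B i) $ r"
      unfolding \<beta>_def .
  qed (use u B projQ_singleton_carrier[OF B i] in simp)
qed

lemma projQ_singleton_mult_col:
  assumes B: "B \<in> carrier_mat n dB" and i: "i < dB"
  shows "projQ B {i} *\<^sub>v col B i = 0\<^sub>v n"
proof -
  have b: "col B i \<in> carrier_vec n" using B i by simp
  show ?thesis
  proof (cases "col B i \<bullet> col B i = 0")
    case True
    then have "col B i = 0\<^sub>v n" using scalar_prod_self_eq_0_iff[OF b] by simp
    then show ?thesis using projQ_singleton_carrier[OF B i] by (intro eq_vecI) auto
  next
    case False
    then show ?thesis using projQ_singleton_mult_vec[OF B i b] b by simp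
  qed
qed

lemma gram_mat_carrier:
  assumes "B \<in> carrier_mat n m" and "S \<subseteq> {..<m}"
  shows "gram_mat B S \<in> carrier_mat (card S) (card S)"
  unfolding gram_mat_def using colsub_carrier[OF assms] by simp

lemma index_gram_mat:
  assumes B: "B \<in> carrier_mat n m" and S: "S \<subseteq> {..<m}" and a: "a < card S" and c: "c < card S"
  shows "gram_mat B S $$ (a, c) = col B (pick S a) \<bullet> col B (pick S c)"
proof -
  have cS: "card {j. j < dim_col B \<and> j \<in> S} = card S"
    using carrier_matD(2)[OF colsub_carrier[OF B S]] by simp
  have "gram_mat B S $$ (a, c) = col (colsub B S) a \<bullet> col (colsub B S) c"
    unfolding gram_mat_def using a c cS by (simp add: row_transpose)
  then show ?thesis using a c cS by (simp add: col_colsub)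
qed

lemma gram_eq_0_if_zero_col:
  assumes B: "B \<in> carrier_mat n m" and S: "S \<subseteq> {..<m}" and j: "j \<in> S" and z: "col B j = 0\<^sub>v n"
  shows "gram B S = 0"
proof -
  define q where "q = card {x\<in>S. x < j}"
  have fin: "finite S" using S finite_subset by blast
  have q: "q < card S" unfolding q_def using j fin by (intro psubset_card_mono) auto
  have pick: "pick S q = j" unfolding q_def by (rule pick_card_in_set[OF j])
  have "gram_mat B S $$ (r, q) = 0" if r: "r < card S" for r
  proof -
    have "pick S r \<in> S" using r by (intro pick_in_set) simp
    then have "col B (pick S r) \<in> carrier_vec n" using B S by auto
    then show ?thesis using index_gram_mat[OF B S r q] z pick by simp
  qed
  then show ?thesis
    unfolding gram_def using laplace_expansion_column[OF gram_mat_carrier[OF B S] q] by simp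
qed

lemma pick_Diff_singleton:
  assumes fin: "finite T" and i: "i \<in> T" and a: "a < card T - 1"
  shows "pick (T - {i}) a = pick T (insert_index (card {x\<in>T. x < i}) a)"
proof -
  define p where "p = card {x\<in>T. x < i}"
  define q where "q = insert_index p a"
  have q: "q < card T" using a unfolding q_def insert_index_def by auto
  define j where "j = pick T q"
  have jT: "j \<in> T" unfolding j_def using q by (intro pick_in_set) simp
  have cj: "card {x\<in>T. x < j} = q" unfolding j_def using q by (intro card_pick) simp
  have qp: "q \<noteq> p" unfolding q_def insert_index_def by auto
  then have ji: "j \<noteq> i" using cj unfolding p_def by auto
  have "card {x\<in>T - {i}. x < j} = a"
  proof (cases "i < j")
    case True
    have "{x\<in>T. x < i} \<subset> {x\<in>T. x < j}" using True jT i by auto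
    then have "p < q" unfolding p_def cj[symmetric] using fin by (intro psubset_card_mono) auto
    moreover have "{x\<in>T - {i}. x < j} = {x\<in>T. x < j} - {i}" by auto
    then have "card {x\<in>T - {i}. x < j} = q - 1" using True i fin cj by simp
    ultimately show ?thesis unfolding q_def insert_index_def by (auto split: if_splits)
  next
    case False
    then have ji': "j < i" using ji by auto
    then have "{x\<in>T. x < j} \<subset> {x\<in>T. x < i}" using jT by auto
    then have "q < p" unfolding p_def cj[symmetric] using fin by (intro psubset_card_mono) auto
    moreover have "{x\<in>T - {i}. x < j} = {x\<in>T. x < j}" using ji' by auto
    ultimately show ?thesis using cj qp unfolding q_def insert_index_def by (auto split: if_splits)
  qed
  then have "pick (T - {i}) a = pick (T - {i}) (card {x\<in>T - {i}. x < j})" by simp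
  also have "\<dots> = j" using jT ji by (intro pick_card_in_set) auto
  finally show ?thesis unfolding j_def q_def p_def .
qed

definition schur_complement :: "'a :: field mat \<Rightarrow> nat \<Rightarrow> 'a mat" where
  "schur_complement G p = mat (dim_row G - 1) (dim_col G - 1) (\<lambda>(a, c).
     G $$ (insert_index p a, insert_index p c) -
     G $$ (insert_index p a, p) * G $$ (p, insert_index p c) / G $$ (p, p))"

lemma index_mat_delete:
  "a < dim_row A - 1 \<Longrightarrow> c < dim_col A - 1 \<Longrightarrow>
   mat_delete A p q $$ (a, c) = A $$ (insert_index p a, insert_index q c)"
  unfolding mat_delete_def insert_index_def by simp

lemma det_column_update_one_mat:
  fixes f :: "nat \<Rightarrow> 'a :: comm_ring_1"
  assumes p: "p < k"
  shows "det (mat k k (\<lambda>(r, c). if r = c then 1 else if c = p then f r else 0)) = 1"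
proof -
  define L where "L = mat k k (\<lambda>(r, c). if r = c then 1 else if c = p then f r else 0)"
  have L: "L \<in> carrier_mat k k" unfolding L_def by simp
  have "det L = (\<Sum>j<k. L $$ (p, j) * cofactor L p j)" by (rule laplace_expansion_row[OF L p])
  also have "\<dots> = (\<Sum>j<k. if j = p then cofactor L p p else 0)"
    by (rule sum.cong) (auto simp: L_def p)
  also have "\<dots> = det (mat_delete L p p)" using p by (simp add: cofactor_def)
  also have "mat_delete L p p = 1\<^sub>m (k - 1)"
  proof (rule eq_matI)
    fix a c assume "a < dim_row (1\<^sub>m (k - 1))" "c < dim_col (1\<^sub>m (k - 1))"
    then have a: "a < k - 1" and c: "c < k - 1" by auto
    have "(insert_index p a = insert_index p c) = (a = c)" "insert_index p c \<noteq> p"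
      by (auto simp: insert_index_def)
    then show "mat_delete L p p $$ (a, c) = 1\<^sub>m (k - 1) $$ (a, c)"
      using a c p L by (simp add: index_mat_delete L_def insert_index_def)
  qed (use L in simp_all)
  finally show ?thesis unfolding L_def by simp
qed

text \<open>Subtracting multiples of row p from the other rows clears column p except for the pivot,
  and what remains after deleting row and column p is the Schur complement.\<close>
lemma det_schur_complement:
  fixes G :: "'a :: field mat"
  assumes G: "G \<in> carrier_mat k k" and p: "p < k" and pivot: "G $$ (p, p) \<noteq> 0"
  shows "det G = G $$ (p, p) * det (schur_complement G p)"
proof -
  define \<beta> where "\<beta> = G $$ (p, p)"
  define L where "L = mat k k (\<lambda>(r, c). if r = c then 1 else if c = p then - G $$ (r, p) / \<beta> else 0)"
  have L: "L \<in> carrier_mat k k" unfolding L_def by simp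
  have ins: "insert_index p a < k" "insert_index p a \<noteq> p" if "a < k - 1" for a
    using that p by (auto simp: insert_index_def)
  have "det L = 1" unfolding L_def by (rule det_column_update_one_mat[OF p])
  define H where "H = L * G"
  have H: "H \<in> carrier_mat k k" unfolding H_def using L G by simp
  have detH: "det H = det G" unfolding H_def det_mult[OF L G] \<open>det L = 1\<close> by simp
  have indexH: "H $$ (r, c) = G $$ (r, c) - (if r = p then 0 else G $$ (r, p) / \<beta> * G $$ (p, c))"
    if r: "r < k" and c: "c < k" for r c
  proof -
    have "H $$ (r, c) = (\<Sum>l<k. L $$ (r, l) * G $$ (l, c))"
      unfolding H_def using r c L G by (simp add: scalar_prod_def atLeast0LessThan)
    also have "\<dots> = (\<Sum>l<k. (if l = r then G $$ (r, c) else 0) +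
        (if l = p \<and> r \<noteq> p then - G $$ (r, p) / \<beta> * G $$ (p, c) else 0))"
      by (rule sum.cong) (auto simp: L_def r)
    also have "\<dots> = G $$ (r, c) - (if r = p then 0 else G $$ (r, p) / \<beta> * G $$ (p, c))"
      using r p by (simp add: sum.distrib)
    finally show ?thesis .
  qed
  have "det H = (\<Sum>r<k. H $$ (r, p) * cofactor H r p)" by (rule laplace_expansion_column[OF H p])
  also have "\<dots> = (\<Sum>r<k. if r = p then \<beta> * cofactor H p p else 0)"
    using pivot by (intro sum.cong) (auto simp: indexH p \<beta>_def)
  also have "\<dots> = \<beta> * cofactor H p p" using p by simp
  also have "cofactor H p p = det (schur_complement G p)"
  proof -
    have "mat_delete H p p = schur_complement G p"
    proof (rule eq_matI)
      fix a c assume "a < dim_row (schur_complement G p)" "c < dim_col (schur_complement G p)"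
      then have a: "a < k - 1" and c: "c < k - 1" using G by (auto simp: schur_complement_def)
      show "mat_delete H p p $$ (a, c) = schur_complement G p $$ (a, c)"
        using a c ins[OF a] ins[OF c] H G
        by (simp add: index_mat_delete indexH schur_complement_def \<beta>_def)
    qed (use H G in \<open>simp_all add: schur_complement_def\<close>)
    then show ?thesis by (simp add: cofactor_def)
  qed
  finally show ?thesis using detH unfolding \<beta>_def by simp
qed

lemma scalar_prod_rejections:
  fixes u w b :: "real vec"
  assumes u: "u \<in> carrier_vec n" and w: "w \<in> carrier_vec n" and b: "b \<in> carrier_vec n"
    and nz: "b \<bullet> b \<noteq> 0"
  shows "(u - ((b \<bullet> u) / (b \<bullet> b)) \<cdot>\<^sub>v b) \<bullet> (w - ((b \<bullet> w) / (b \<bullet> b)) \<cdot>\<^sub>v b) =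
    u \<bullet> w - (b \<bullet> u) * (b \<bullet> w) / (b \<bullet> b)"
proof -
  define x where "x = (b \<bullet> u) / (b \<bullet> b)"
  define y where "y = (b \<bullet> w) / (b \<bullet> b)"
  have "(u - x \<cdot>\<^sub>v b) \<bullet> (w - y \<cdot>\<^sub>v b) = u \<bullet> w - y * (u \<bullet> b) - x * (b \<bullet> w) + x * y * (b \<bullet> b)"
    using u w b by (simp add: minus_scalar_prod_distrib scalar_prod_minus_distrib algebra_simps)
  also have "\<dots> = u \<bullet> w - (b \<bullet> u) * (b \<bullet> w) / (b \<bullet> b)"
    unfolding x_def y_def using nz comm_scalar_prod[OF u b] by (simp add: field_simps)
  finally show ?thesis unfolding x_def y_def .
qed

section \<open>Removing one column\<close>

lemma gram_mat_projQ_singleton: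
  assumes B: "B \<in> carrier_mat n dB" and T: "T \<subseteq> {..<dB}" and i: "i \<in> T"
    and nz: "col B i \<bullet> col B i \<noteq> 0"
  shows "gram_mat (projQ B {i} * B) (T - {i}) = schur_complement (gram_mat B T) (card {x\<in>T. x < i})"
proof -
  define p where "p = card {x\<in>T. x < i}"
  define G where "G = gram_mat B T"
  define Q where "Q = projQ B {i}"
  have fin: "finite T" using T finite_subset by blast
  have i_lt: "i < dB" using T i by auto
  have p: "p < card T" unfolding p_def using i fin by (intro psubset_card_mono) auto
  have pick_p: "pick T p = i" unfolding p_def by (rule pick_card_in_set[OF i])
  have G: "G \<in> carrier_mat (card T) (card T)" unfolding G_def by (rule gram_mat_carrier[OF B T])
  have QB: "Q * B \<in> carrier_mat n dB" unfolding Q_def using projQ_singleton_carrier[OF B i_lt] B by simp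
  have T': "T - {i} \<subseteq> {..<dB}" using T by auto
  have cT': "card (T - {i}) = card T - 1" using fin i by simp
  have pick_lt: "pick T a < dB" if "a < card T" for a
    using pick_in_set[of a T] that T by auto
  have col_QB: "col (Q * B) j = Q *\<^sub>v col B j" if "j < dB" for j
    using that B by (simp add: col_mult_mat)
  have b: "col B i \<in> carrier_vec n" using B i_lt by simp
  show ?thesis
    unfolding Q_def[symmetric] G_def[symmetric] p_def[symmetric]
  proof (rule eq_matI)
    fix a c assume "a < dim_row (schur_complement G p)" "c < dim_col (schur_complement G p)"
    then have a: "a < card T - 1" and c: "c < card T - 1" using G by (auto simp: schur_complement_def)
    define a' c' where "a' = insert_index p a" and "c' = insert_index p c"
    have a': "a' < card T" and c': "c' < card T" using a c unfolding a'_def c'_def insert_index_def by auto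
    define u w where "u = col B (pick T a')" and "w = col B (pick T c')"
    have u: "u \<in> carrier_vec n" and w: "w \<in> carrier_vec n"
      unfolding u_def w_def using B pick_lt a' c' by auto
    have "gram_mat (Q * B) (T - {i}) $$ (a, c) = col (Q * B) (pick (T - {i}) a) \<bullet> col (Q * B) (pick (T - {i}) c)"
      using a c cT' by (intro index_gram_mat[OF QB T']) auto
    also have "\<dots> = (Q *\<^sub>v u) \<bullet> (Q *\<^sub>v w)"
      using pick_Diff_singleton[OF fin i] a c col_QB pick_lt a' c'
      unfolding u_def w_def a'_def c'_def p_def by simp
    also have "\<dots> = u \<bullet> w - (col B i \<bullet> u) * (col B i \<bullet> w) / (col B i \<bullet> col B i)"
      unfolding Q_def projQ_singleton_mult_vec[OF B i_lt u] projQ_singleton_mult_vec[OF B i_lt w]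
      by (rule scalar_prod_rejections[OF u w b nz])
    also have "\<dots> = G $$ (a', c') - G $$ (a', p) * G $$ (p, c') / G $$ (p, p)"
      using index_gram_mat[OF B T] a' c' p pick_p comm_scalar_prod[OF u b]
      unfolding G_def u_def w_def by simp
    also have "\<dots> = schur_complement G p $$ (a, c)"
      using a c G unfolding a'_def c'_def schur_complement_def by simp
    finally show "gram_mat (Q * B) (T - {i}) $$ (a, c) = schur_complement G p $$ (a, c)" .
  qed (use G gram_mat_carrier[OF QB T'] cT' in \<open>simp_all add: schur_complement_def\<close>)
qed

lemma gram_factor_column:
  assumes B: "B \<in> carrier_mat n dB" and T: "T \<subseteq> {..<dB}" and i: "i \<in> T"
  shows "gram B T = (col B i \<bullet> col B i) * gram (projQ B {i} * B) (T - {i})"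
proof (cases "col B i \<bullet> col B i = 0")
  case True
  have "col B i \<in> carrier_vec n" using B i T by auto
  then have "col B i = 0\<^sub>v n" using True scalar_prod_self_eq_0_iff by blast
  then show ?thesis using gram_eq_0_if_zero_col[OF B T i] True by simp
next
  case False
  define p where "p = card {x\<in>T. x < i}"
  have fin: "finite T" using T finite_subset by blast
  have p: "p < card T" unfolding p_def using i fin by (intro psubset_card_mono) auto
  have "gram_mat B T $$ (p, p) = col B i \<bullet> col B i"
    using index_gram_mat[OF B T p p] pick_card_in_set[OF i] unfolding p_def by simp
  then show ?thesis
    using det_schur_complement[OF gram_mat_carrier[OF B T] p] False
    unfolding gram_def gram_mat_projQ_singleton[OF B T i False] p_def by simp
qed

lemma mult_colsub_eq_0_split:
  assumes Q: "dim_col Q = dim_row B" and i: "i \<in> T"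
  shows "Q * colsub B T = 0\<^sub>m (dim_row Q) (dim_col (colsub B T)) \<longleftrightarrow>
    Q * colsub B {i} = 0\<^sub>m (dim_row Q) (dim_col (colsub B {i})) \<and>
    Q * colsub B (T - {i}) = 0\<^sub>m (dim_row Q) (dim_col (colsub B (T - {i})))"
  unfolding mult_colsub_eq_0_iff[OF Q] using i by blast

text \<open>The right side R is symmetric and, like the left side PN, annihilates b and M and hence N;
  therefore PN R = PN and PN R = R.\<close>
lemma compl_proj_factor:
  assumes mpN: "moore_penrose N XN" and N: "N \<in> carrier_mat n tN"
    and mpb: "moore_penrose b Xb" and b: "b \<in> carrier_mat n tb"
    and M: "M \<in> carrier_mat n tM"
    and mpN': "moore_penrose ((1\<^sub>m n - b * Xb) * M) XN'"
    and span: "\<And>P. P \<in> carrier_mat n n \<Longrightarrow>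
       P * N = 0\<^sub>m n tN \<longleftrightarrow> P * b = 0\<^sub>m n tb \<and> P * M = 0\<^sub>m n tM"
  shows "1\<^sub>m n - N * XN = (1\<^sub>m n - (1\<^sub>m n - b * Xb) * M * XN') * (1\<^sub>m n - b * Xb)"
proof -
  define Qb where "Qb = 1\<^sub>m n - b * Xb"
  define N' where "N' = Qb * M"
  define PN Q' where "PN = 1\<^sub>m n - N * XN" and "Q' = 1\<^sub>m n - N' * XN'"
  have Qb: "Qb \<in> carrier_mat n n" unfolding Qb_def by (rule compl_proj_carrier[OF mpb b])
  have N': "N' \<in> carrier_mat n tM" unfolding N'_def using Qb M by simp
  note mpN' = mpN'[folded Qb_def, folded N'_def]
  have PN: "PN \<in> carrier_mat n n" unfolding PN_def by (rule compl_proj_carrier[OF mpN N])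
  have Q': "Q' \<in> carrier_mat n n" unfolding Q'_def by (rule compl_proj_carrier[OF mpN' N'])
  have "PN * N = 0\<^sub>m n tN" unfolding PN_def by (rule compl_proj_mult_self[OF mpN N])
  then have PNb: "PN * b = 0\<^sub>m n tb" and PNM: "PN * M = 0\<^sub>m n tM" using span[OF PN] by auto
  have PNQb: "PN * Qb = PN" unfolding Qb_def by (rule compl_proj_absorb_left[OF mpb b PN PNb])
  have "PN * N' = 0\<^sub>m n tM"
    unfolding N'_def using PNM PNQb by (simp add: assoc_mult_mat[symmetric, OF PN Qb M])
  then have PNQ': "PN * Q' = PN" unfolding Q'_def by (rule compl_proj_absorb_left[OF mpN' N' PN])
  define R where "R = Q' * Qb"
  have R: "R \<in> carrier_mat n n" unfolding R_def using Q' Qb by simp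
  have "PN * R = PN" unfolding R_def using PNQ' PNQb by (simp add: assoc_mult_mat[symmetric, OF PN Q' Qb])
  have QbN': "Qb * N' = N'"
    unfolding N'_def using compl_proj_idem[OF mpb b, folded Qb_def]
    by (simp add: assoc_mult_mat[symmetric, OF Qb Qb M])
  have Qbs: "transpose_mat Qb = Qb" unfolding Qb_def by (rule transpose_compl_proj[OF mpb b])
  have Q's: "transpose_mat Q' = Q'" unfolding Q'_def by (rule transpose_compl_proj[OF mpN' N'])
  have "Qb * Q' = Q' * Qb" unfolding Q'_def by (rule compl_proj_commute[OF mpN' N' Qb Qbs QbN'])
  then have Rs: "transpose_mat R = R" unfolding R_def using Qbs Q's by (simp add: transpose_mult[OF Q' Qb])
  have "R * b = 0\<^sub>m n tb"
    unfolding R_def using compl_proj_mult_self[OF mpb b, folded Qb_def]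
    by (simp add: assoc_mult_mat[OF Q' Qb b] right_mult_zero_mat[OF Q'])
  moreover have "R * M = 0\<^sub>m n tM"
    unfolding R_def using compl_proj_mult_self[OF mpN' N', folded Q'_def]
    by (simp add: assoc_mult_mat[OF Q' Qb M] N'_def[symmetric])
  ultimately have "R * N = 0\<^sub>m n tN" using span[OF R] by simp
  then have "PN * R = R" unfolding PN_def by (rule compl_proj_absorb_right[OF mpN N R Rs])
  with \<open>PN * R = PN\<close> show ?thesis unfolding PN_def R_def Q'_def N'_def Qb_def by simp
qed

lemma projQ_factor_column:
  assumes B: "B \<in> carrier_mat n dB" and T: "T \<subseteq> {..<dB}" and i: "i \<in> T" and g: "gram B T \<noteq> 0"
  shows "projQ B T = projQ (projQ B {i} * B) (T - {i}) * projQ B {i}"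
proof -
  define N b M where "N = colsub B T" and "b = colsub B {i}" and "M = colsub B (T - {i})"
  define Xb where "Xb = (1 / (col B i \<bullet> col B i)) \<cdot>\<^sub>m transpose_mat b"
  have i_lt: "i < dB" using T i by auto
  have mpb: "moore_penrose b Xb" unfolding b_def Xb_def by (rule moore_penrose_colsub_singleton[OF B i_lt])
  have Qi: "projQ B {i} = 1\<^sub>m n - b * Xb"
    using projQ_eq[OF mpb[unfolded b_def]] B unfolding b_def by simp
  have Qic: "projQ B {i} \<in> carrier_mat n n" by (rule projQ_singleton_carrier[OF B i_lt])
  have colsubB: "colsub B S \<in> carrier_mat n (dim_col (colsub B S))" for S
    using carrier_matD(1)[OF B] by (intro carrier_matI) simp_all
  have N'M: "colsub (projQ B {i} * B) (T - {i}) = (1\<^sub>m n - b * Xb) * M" unfolding M_def Qi[symmetric]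
    by (rule colsub_mult) (simp add: carrier_matD(2)[OF Qic] carrier_matD(1)[OF B])
  have g': "gram (projQ B {i} * B) (T - {i}) \<noteq> 0" using g gram_factor_column[OF B T i] by auto
  note mpN = moore_penrose_colsub[OF g, folded N_def]
  note mpN' = moore_penrose_colsub[OF g', unfolded N'M]
  have span: "P * N = 0\<^sub>m n (dim_col N) \<longleftrightarrow> P * b = 0\<^sub>m n (dim_col b) \<and> P * M = 0\<^sub>m n (dim_col M)"
    if "P \<in> carrier_mat n n" for P
    using mult_colsub_eq_0_split[of P B i T] that B i unfolding N_def b_def M_def by auto
  have "projQ B T = 1\<^sub>m n - N * pinv N" using projQ_eq[OF mpN[unfolded N_def]] B unfolding N_def by simp
  also have "\<dots> = (1\<^sub>m n - (1\<^sub>m n - b * Xb) * M * pinv ((1\<^sub>m n - b * Xb) * M)) * (1\<^sub>m n - b * Xb)"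
    using compl_proj_factor[OF mpN colsubB[of T, folded N_def] mpb colsubB[of "{i}", folded b_def]
        colsubB[of "T - {i}", folded M_def] mpN' span] .
  also have "\<dots> = projQ (projQ B {i} * B) (T - {i}) * projQ B {i}"
    using projQ_eq[OF moore_penrose_colsub[OF g']] carrier_matD(1)[OF Qic]
    unfolding N'M[symmetric] unfolding Qi[symmetric] by simp
  finally show ?thesis .
qed

lemma gram_pTU_factor_column:
  assumes A: "A \<in> carrier_mat n d" and B: "B \<in> carrier_mat n dB" and T: "T \<subseteq> {..<dB}" and i: "i \<in> T"
  shows "gram B T * pTU T U x A B C = (col B i \<bullet> col B i) *
     (gram (projQ B {i} * B) (T - {i}) * pTU (T - {i}) U x (projQ B {i} * A) (projQ B {i} * B) C)"
proof (cases "gram B T = 0")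
  case True
  then have "(col B i \<bullet> col B i) * gram (projQ B {i} * B) (T - {i}) = 0"
    using gram_factor_column[OF B T i] by simp
  then show ?thesis using True by (metis mult.assoc mult_zero_left)
next
  case False
  define Qi where "Qi = projQ B {i}"
  have i_lt: "i < dB" using T i by auto
  have Qic: "Qi \<in> carrier_mat n n" unfolding Qi_def by (rule projQ_singleton_carrier[OF B i_lt])
  have g': "gram (Qi * B) (T - {i}) \<noteq> 0" using False gram_factor_column[OF B T i] unfolding Qi_def by auto
  have QB: "Qi * B \<in> carrier_mat n dB" using Qic B by simp
  have Q'c: "projQ (Qi * B) (T - {i}) \<in> carrier_mat n n"
    by (rule projQ_carrier[OF QB moore_penrose_colsub[OF g']])
  have "projQ B T * A = projQ (Qi * B) (T - {i}) * (Qi * A)"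
    unfolding projQ_factor_column[OF B T i False] Qi_def[symmetric] by (rule assoc_mult_mat[OF Q'c Qic A])
  then have "pTU T U x A B C = pTU (T - {i}) U x (Qi * A) (Qi * B) C"
    unfolding pTU_def Let_def by simp
  then show ?thesis unfolding gram_factor_column[OF B T i] Qi_def by simp
qed

lemma gram_projQ_singleton_eq_0:
  assumes B: "B \<in> carrier_mat n dB" and T: "T \<subseteq> {..<dB}" and i: "i \<in> T"
  shows "gram (projQ B {i} * B) T = 0"
proof -
  have i_lt: "i < dB" using T i by auto
  have QB: "projQ B {i} * B \<in> carrier_mat n dB" using projQ_singleton_carrier[OF B i_lt] B by simp
  have "col (projQ B {i} * B) i = 0\<^sub>v n"
    using projQ_singleton_mult_col[OF B i_lt] B i_lt by (simp add: col_mult_mat)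
  then show ?thesis by (rule gram_eq_0_if_zero_col[OF QB T i])
qed

section \<open>The recursions\<close>

text \<open>Double counting: each k-set T is reached once from every i \<in> T by removing i, and
  (k-1)-sets containing i contribute nothing.\<close>
lemma sum_card_subsets_remove:
  fixes F :: "nat set \<Rightarrow> 'a :: field_char_0" and H :: "nat \<Rightarrow> nat set \<Rightarrow> 'a" and w :: "nat \<Rightarrow> 'a"
  assumes k: "1 \<le> k"
    and remove: "\<And>T i. T \<subseteq> {..<m} \<Longrightarrow> card T = k \<Longrightarrow> i \<in> T \<Longrightarrow> F T = w i * H i (T - {i})"
    and vanish: "\<And>T i. T \<subseteq> {..<m} \<Longrightarrow> card T = k - 1 \<Longrightarrow> i \<in> T \<Longrightarrow> H i T = 0"
  shows "(\<Sum>T\<in>{T. T \<subseteq> {..<m} \<and> card T = k}. F T) =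
    1 / of_nat k * (\<Sum>i<m. w i * (\<Sum>T\<in>{T. T \<subseteq> {..<m} \<and> card T = k - 1}. H i T))"
proof -
  define Sk where "Sk = {T. T \<subseteq> {..<m} \<and> card T = k}"
  define Sk1 where "Sk1 = {T. T \<subseteq> {..<m} \<and> card T = k - 1}"
  have fin: "finite Sk" "finite Sk1" unfolding Sk_def Sk1_def
    by (auto intro: finite_subset[of _ "Pow {..<m}"])
  have per_element: "w i * (\<Sum>T\<in>Sk1. H i T) = (\<Sum>T\<in>Sk. if i \<in> T then F T else 0)" if i: "i < m" for i
  proof -
    have "w i * (\<Sum>T\<in>Sk1. H i T) = (\<Sum>T\<in>{T\<in>Sk1. i \<notin> T}. w i * H i T)"
      unfolding sum_distrib_left using fin vanish unfolding Sk1_def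
      by (intro sum.mono_neutral_right) auto
    also have "\<dots> = (\<Sum>T\<in>{T\<in>Sk. i \<in> T}. F T)"
    proof (rule sum.reindex_bij_witness[of _ "\<lambda>T. T - {i}" "insert i"])
      fix T assume T: "T \<in> {T\<in>Sk1. i \<notin> T}"
      then have "finite T" unfolding Sk1_def by (auto intro: finite_subset)
      then show "insert i T \<in> {T\<in>Sk. i \<in> T}" using T i k unfolding Sk_def Sk1_def by auto
      then show "F (insert i T) = w i * H i T"
        using remove[of "insert i T" i] T unfolding Sk_def by auto
    qed (auto simp: Sk_def Sk1_def)
    also have "\<dots> = (\<Sum>T\<in>Sk. if i \<in> T then F T else 0)"
      using fin by (simp add: sum.inter_filter)
    finally show ?thesis .
  qed
  have "(\<Sum>i<m. w i * (\<Sum>T\<in>Sk1. H i T)) = (\<Sum>T\<in>Sk. \<Sum>i<m. if i \<in> T then F T else 0)"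
    using per_element by (simp add: sum.swap[of _ Sk])
  also have "\<dots> = (\<Sum>T\<in>Sk. of_nat k * F T)"
  proof (rule sum.cong[OF refl])
    fix T assume "T \<in> Sk"
    then have "{..<m} \<inter> T = T" and "card T = k" unfolding Sk_def by auto
    then show "(\<Sum>i<m. if i \<in> T then F T else 0) = of_nat k * F T"
      by (simp add: sum.inter_restrict[symmetric])
  qed
  finally show ?thesis
    unfolding Sk_def[symmetric] Sk1_def[symmetric] using k by (simp add: sum_distrib_left)
qed

lemma transpose_submatrix: "transpose_mat (submatrix A I J) = submatrix (transpose_mat A) J I"
  by (rule eq_matI) (auto simp: submatrix_def pick_le)

lemma rowsub_eq_transpose_colsub: "rowsub C U = transpose_mat (colsub (transpose_mat C) U)"
  unfolding rowsub_def colsub_def transpose_submatrix by simp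

lemma det_rowsub_gram: "det (rowsub C U * transpose_mat (rowsub C U)) = gram (transpose_mat C) U"
  unfolding rowsub_eq_transpose_colsub gram_def gram_mat_def by simp

lemma Pkr_eq_gram:
  assumes "B \<in> carrier_mat n dB" and "C \<in> carrier_mat nC d"
  shows "Pkr k r x A B C =
    (\<Sum>U\<in>{U. U \<subseteq> {..<nC} \<and> card U = r}. \<Sum>T\<in>{T. T \<subseteq> {..<dB} \<and> card T = k}.
       gram (transpose_mat C) U * (gram B T * pTU T U x A B C))"
  unfolding Pkr_def det_rowsub_gram using assms by (simp add: gram_def gram_mat_def mult.assoc)

lemma Pkr_recursion_B:
  assumes A: "A \<in> carrier_mat n d" and B: "B \<in> carrier_mat n dB" and C: "C \<in> carrier_mat nC d"
    and k: "1 \<le> k"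
  shows "Pkr k r x A B C = 1 / real k * (\<Sum>i<dB. (col B i \<bullet> col B i) *
     Pkr (k - 1) r x (projQ B {i} * A) (projQ B {i} * B) C)"
proof -
  let ?SU = "{U. U \<subseteq> {..<nC} \<and> card U = r}"
  let ?Sk1 = "{T. T \<subseteq> {..<dB} \<and> card T = k - 1}"
  let ?H = "\<lambda>U i T. gram (projQ B {i} * B) T * pTU T U x (projQ B {i} * A) (projQ B {i} * B) C"
  have inner: "(\<Sum>T\<in>{T. T \<subseteq> {..<dB} \<and> card T = k}. gram B T * pTU T U x A B C) =
      1 / real k * (\<Sum>i<dB. (col B i \<bullet> col B i) * (\<Sum>T\<in>?Sk1. ?H U i T))" for U
  proof (rule sum_card_subsets_remove[OF k])
    fix T i assume T: "T \<subseteq> {..<dB}" and i: "i \<in> T"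
    show "gram B T * pTU T U x A B C = (col B i \<bullet> col B i) * ?H U i (T - {i})"
      by (rule gram_pTU_factor_column[OF A B T i])
  next
    fix T i assume T: "T \<subseteq> {..<dB}" and i: "i \<in> T"
    show "?H U i T = 0" by (simp add: gram_projQ_singleton_eq_0[OF B T i])
  qed
  have "Pkr k r x A B C = (\<Sum>U\<in>?SU. gram (transpose_mat C) U *
      (1 / real k * (\<Sum>i<dB. (col B i \<bullet> col B i) * (\<Sum>T\<in>?Sk1. ?H U i T))))"
    unfolding Pkr_eq_gram[OF B C] sum_distrib_left[symmetric] inner ..
  also have "\<dots> = 1 / real k * (\<Sum>i<dB. (col B i \<bullet> col B i) *
      (\<Sum>U\<in>?SU. gram (transpose_mat C) U * (\<Sum>T\<in>?Sk1. ?H U i T)))"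
    by (simp add: sum_distrib_left sum.swap[of _ ?SU] algebra_simps)
  also have "\<dots> = 1 / real k * (\<Sum>i<dB. (col B i \<bullet> col B i) *
      Pkr (k - 1) r x (projQ B {i} * A) (projQ B {i} * B) C)"
  proof (intro arg_cong2[where f = "(*)"] sum.cong refl)
    fix i assume "i \<in> {..<dB}"
    then have QB: "projQ B {i} * B \<in> carrier_mat n dB"
      by (intro mult_carrier_mat[OF projQ_singleton_carrier[OF B] B]) simp
    show "(\<Sum>U\<in>?SU. gram (transpose_mat C) U * (\<Sum>T\<in>?Sk1. ?H U i T)) =
        Pkr (k - 1) r x (projQ B {i} * A) (projQ B {i} * B) C"
      unfolding Pkr_eq_gram[OF QB C] by (simp add: sum_distrib_left)
  qed
  finally show ?thesis .
qed

lemma projP_eq_projQ_transpose: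
  assumes C: "C \<in> carrier_mat nC d" and X: "moore_penrose (colsub (transpose_mat C) U) X"
  shows "projP C U = projQ (transpose_mat C) U"
proof -
  define Y where "Y = colsub (transpose_mat C) U"
  have YX: "transpose_mat (Y * X) = Y * X" and Xc: "X \<in> carrier_mat (dim_col Y) (dim_row Y)"
    using X unfolding Y_def moore_penrose_def by auto
  have "pinv (rowsub C U) * rowsub C U = transpose_mat X * transpose_mat Y"
    unfolding rowsub_eq_transpose_colsub pinv_transpose[OF X] Y_def ..
  also have "\<dots> = Y * X" using YX Xc by (simp add: transpose_mult_dims)
  finally show ?thesis
    unfolding projP_def projQ_eq[OF X] Y_def using C by simp
qed

lemma
  assumes C: "C \<in> carrier_mat nC d" and i: "i < nC"
  shows projP_singleton: "projP C {i} = projQ (transpose_mat C) {i}"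
    and transpose_mult_projP_singleton:
      "transpose_mat (C * projP C {i}) = projQ (transpose_mat C) {i} * transpose_mat C"
proof -
  have Ct: "transpose_mat C \<in> carrier_mat d nC" using C by simp
  show P: "projP C {i} = projQ (transpose_mat C) {i}"
    by (rule projP_eq_projQ_transpose[OF C moore_penrose_colsub_singleton[OF Ct i]])
  show "transpose_mat (C * projP C {i}) = projQ (transpose_mat C) {i} * transpose_mat C"
    unfolding P using transpose_mult[OF C projQ_singleton_carrier[OF Ct i]]
      transpose_projQ_singleton[OF Ct i] by simp
qed

lemma projP_factor_row:
  assumes C: "C \<in> carrier_mat nC d" and U: "U \<subseteq> {..<nC}" and i: "i \<in> U"
    and g: "gram (transpose_mat C) U \<noteq> 0"
  shows "projP C U = projP C {i} * projP (C * projP C {i}) (U - {i})"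
proof -
  define Ct P where "Ct = transpose_mat C" and "P = projP C {i}"
  have Ct: "Ct \<in> carrier_mat d nC" unfolding Ct_def using C by simp
  have i_lt: "i < nC" using U i by auto
  have P: "P = projQ Ct {i}" unfolding P_def Ct_def by (rule projP_singleton[OF C i_lt])
  have CPt: "transpose_mat (C * P) = P * Ct"
    using transpose_mult_projP_singleton[OF C i_lt] unfolding P_def Ct_def projP_singleton[OF C i_lt] .
  have Pc: "P \<in> carrier_mat d d" unfolding P using projQ_singleton_carrier[OF Ct i_lt] .
  have PCt: "P * Ct \<in> carrier_mat d nC" using Pc Ct by simp
  have CP: "C * P \<in> carrier_mat nC d" using C Pc by simp
  have g': "gram (P * Ct) (U - {i}) \<noteq> 0"
    using g gram_factor_column[OF Ct U i] unfolding Ct_def[symmetric] P by auto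
  define P' where "P' = projQ (P * Ct) (U - {i})"
  have P'c: "P' \<in> carrier_mat d d" and P's: "transpose_mat P' = P'"
    unfolding P'_def using projQ_carrier[OF PCt moore_penrose_colsub[OF g']]
      transpose_projQ[OF PCt moore_penrose_colsub[OF g']] by auto
  have "projP C U = projQ Ct U"
    using projP_eq_projQ_transpose[OF C moore_penrose_colsub[OF g]] unfolding Ct_def .
  also have "\<dots> = transpose_mat (projQ Ct U)"
    using transpose_projQ[OF Ct moore_penrose_colsub[OF g[folded Ct_def]]] by simp
  also have "\<dots> = transpose_mat (P' * P)"
    unfolding projQ_factor_column[OF Ct U i g[folded Ct_def]] P'_def P ..
  also have "\<dots> = P * P'"
    using transpose_mult[OF P'c Pc] P's transpose_projQ_singleton[OF Ct i_lt] P by simp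
  also have "P' = projP (C * P) (U - {i})"
    unfolding P'_def projP_eq_projQ_transpose[OF CP moore_penrose_colsub[OF g'[folded CPt]]] CPt ..
  finally show ?thesis unfolding P_def .
qed

lemma gram_pTU_factor_row:
  assumes A: "A \<in> carrier_mat n d" and B: "B \<in> carrier_mat n dB" and C: "C \<in> carrier_mat nC d"
    and U: "U \<subseteq> {..<nC}" and i: "i \<in> U"
  shows "gram (transpose_mat C) U * (gram B T * pTU T U x A B C) = (row C i \<bullet> row C i) *
     (gram (transpose_mat (C * projP C {i})) (U - {i}) *
       (gram B T * pTU T (U - {i}) x (A * projP C {i}) B (C * projP C {i})))"
proof -
  define P where "P = projP C {i}"
  have Ct: "transpose_mat C \<in> carrier_mat d nC" using C by simp
  have i_lt: "i < nC" using U i by auto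
  have factor: "gram (transpose_mat C) U = (row C i \<bullet> row C i) * gram (transpose_mat (C * P)) (U - {i})"
    using gram_factor_column[OF Ct U i] C i_lt
    unfolding P_def transpose_mult_projP_singleton[OF C i_lt] by simp
  show ?thesis
  proof (cases "gram (transpose_mat C) U = 0 \<or> gram B T = 0")
    case True
    then show ?thesis unfolding P_def[symmetric] factor by auto
  next
    case False
    then have gU: "gram (transpose_mat C) U \<noteq> 0" and gT: "gram B T \<noteq> 0" by auto
    have Pc: "P \<in> carrier_mat d d"
      unfolding P_def projP_singleton[OF C i_lt] by (rule projQ_singleton_carrier[OF Ct i_lt])
    define P' where "P' = projP (C * P) (U - {i})"
    have CP: "C * P \<in> carrier_mat nC d" using C Pc by simp
    have g': "gram (transpose_mat (C * P)) (U - {i}) \<noteq> 0" using gU factor by auto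
    have P'c: "P' \<in> carrier_mat d d"
      unfolding P'_def projP_eq_projQ_transpose[OF CP moore_penrose_colsub[OF g']]
      by (rule projQ_carrier[OF _ moore_penrose_colsub[OF g']]) (use CP in simp)
    define QT where "QT = projQ B T"
    have QT: "QT \<in> carrier_mat n n"
      unfolding QT_def by (rule projQ_carrier[OF B moore_penrose_colsub[OF gT]])
    have AP: "A * P \<in> carrier_mat n d" using A Pc by simp
    have "QT * A * (P * P') = QT * (A * (P * P'))"
      by (rule assoc_mult_mat[OF QT A mult_carrier_mat[OF Pc P'c]])
    also have "A * (P * P') = A * P * P'" by (rule assoc_mult_mat[symmetric, OF A Pc P'c])
    also have "QT * (A * P * P') = QT * (A * P) * P'" by (rule assoc_mult_mat[symmetric, OF QT AP P'c])
    finally have "QT * A * projP C U = QT * (A * P) * projP (C * P) (U - {i})"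
      unfolding projP_factor_row[OF C U i gU, folded P_def, folded P'_def] P'_def .
    then have "pTU T U x A B C = pTU T (U - {i}) x (A * P) B (C * P)"
      unfolding pTU_def Let_def QT_def using A Pc by simp
    then show ?thesis unfolding P_def[symmetric] factor by simp
  qed
qed

lemma Pkr_recursion_C:
  assumes A: "A \<in> carrier_mat n d" and B: "B \<in> carrier_mat n dB" and C: "C \<in> carrier_mat nC d"
    and r: "1 \<le> r"
  shows "Pkr k r x A B C = 1 / real r * (\<Sum>i<nC. (row C i \<bullet> row C i) *
     Pkr k (r - 1) x (A * projP C {i}) B (C * projP C {i}))"
proof -
  let ?Sk = "{T. T \<subseteq> {..<dB} \<and> card T = k}"
  let ?SU1 = "{U. U \<subseteq> {..<nC} \<and> card U = r - 1}"
  let ?H = "\<lambda>T i U. gram (transpose_mat (C * projP C {i})) U *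
     (gram B T * pTU T U x (A * projP C {i}) B (C * projP C {i}))"
  have inner: "(\<Sum>U\<in>{U. U \<subseteq> {..<nC} \<and> card U = r}. gram (transpose_mat C) U * (gram B T * pTU T U x A B C)) =
      1 / real r * (\<Sum>i<nC. (row C i \<bullet> row C i) * (\<Sum>U\<in>?SU1. ?H T i U))" for T
  proof (rule sum_card_subsets_remove[OF r])
    fix U i assume U: "U \<subseteq> {..<nC}" and i: "i \<in> U"
    show "gram (transpose_mat C) U * (gram B T * pTU T U x A B C) = (row C i \<bullet> row C i) * ?H T i (U - {i})"
      by (rule gram_pTU_factor_row[OF A B C U i])
  next
    fix U i assume U: "U \<subseteq> {..<nC}" and i: "i \<in> U"
    have i_lt: "i < nC" using U i by auto
    have "gram (transpose_mat (C * projP C {i})) U = 0"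
      unfolding transpose_mult_projP_singleton[OF C i_lt]
      using gram_projQ_singleton_eq_0[of "transpose_mat C" d nC U i] C U i by simp
    then show "?H T i U = 0" by simp
  qed
  have "Pkr k r x A B C = (\<Sum>T\<in>?Sk. \<Sum>U\<in>{U. U \<subseteq> {..<nC} \<and> card U = r}.
      gram (transpose_mat C) U * (gram B T * pTU T U x A B C))"
    unfolding Pkr_eq_gram[OF B C] by (rule sum.swap)
  also have "\<dots> = (\<Sum>T\<in>?Sk. 1 / real r * (\<Sum>i<nC. (row C i \<bullet> row C i) * (\<Sum>U\<in>?SU1. ?H T i U)))"
    unfolding inner ..
  also have "\<dots> = 1 / real r * (\<Sum>i<nC. (row C i \<bullet> row C i) * (\<Sum>T\<in>?Sk. \<Sum>U\<in>?SU1. ?H T i U))"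
    by (simp add: sum_distrib_left sum.swap[of _ ?Sk] algebra_simps)
  also have "\<dots> = 1 / real r * (\<Sum>i<nC. (row C i \<bullet> row C i) *
      Pkr k (r - 1) x (A * projP C {i}) B (C * projP C {i}))"
  proof (intro arg_cong2[where f = "(*)"] sum.cong refl)
    fix i assume "i \<in> {..<nC}"
    then have i: "i < nC" by simp
    have CP: "C * projP C {i} \<in> carrier_mat nC d"
      unfolding projP_singleton[OF C i] using projQ_singleton_carrier[of "transpose_mat C" d nC i] C i by simp
    show "(\<Sum>T\<in>?Sk. \<Sum>U\<in>?SU1. ?H T i U) = Pkr k (r - 1) x (A * projP C {i}) B (C * projP C {i})"
      unfolding Pkr_eq_gram[OF B CP] by (rule sum.swap)
  qed
  finally show ?thesis .
qed

theorem lemmaA4: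
  fixes A B C :: "real mat" and n d dB nC k r :: nat
  assumes "A \<in> carrier_mat n d" and "B \<in> carrier_mat n dB" and "C \<in> carrier_mat nC d"
    and "1 \<le> k" and "k \<le> vec_space.rank n B"
    and "1 \<le> r" and "r \<le> vec_space.rank nC C"
  shows "(\<forall>x. Pkr k r x A B C =
            1 / real k * (\<Sum>i<dB. (col B i \<bullet> col B i) *
               Pkr (k - 1) r x (projQ B {i} * A) (projQ B {i} * B) C))
       \<and> (\<forall>x. Pkr k r x A B C =
            1 / real r * (\<Sum>i<nC. (row C i \<bullet> row C i) *
               Pkr k (r - 1) x (A * projP C {i}) B (C * projP C {i})))"
  using Pkr_recursion_B[OF assms(1-4)] Pkr_recursion_C[OF assms(1-3) assms(6)] by blast

end
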